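(* Let $\mathbf{A}\in\mathbb{R}^{m\times n}$ have rows $\mathbf{a}_1^\mathsf{T},\dots,\mathbf{a}_m^\mathsf{T}$ and let $\lambda>\max_l\|\mathbf{a}_l\|_\infty$. Then every stationary point $\hat{\boldsymbol{x}}$ of $$\text{(P}_\lambda\text{)}\quad \min_{\boldsymbol{x}\in[-1,1]^n}\ \max_{l\in\{1,\dots,m\}}\mathbf{a}_l^\mathsf{T}\boldsymbol{x}-\lambda\|\boldsymbol{x}\|_1$$ satisfies $\hat{x}_i\in\{-1,0,1\}$ for all $i=1,\dots,n$.
   Context: A point $\hat{\boldsymbol{x}}\in[-1,1]^n$ is a stationary point of (P$_\lambda$) if there exist $\mathbf{u},\mathbf{v}\in\mathbb{R}^n_{+}$ such that $\mathbf{0}\in\partial\big(\max_l\mathbf{a}_l^\mathsf{T}\hat{\boldsymbol{x}}\big)-\lambda\,\partial\|\hat{\boldsymbol{x}}\|_1-\mathbf{u}+\mathbf{v}$ and $u_i(\hat{x}_i+1)=0$, $v_i(\hat{x}_i-1)=0$ for all $i$, where $\partial$ denotes the convex subdifferential of the convex functions $\boldsymbol{x}\mapsto\max_l\mathbf{a}_l^\mathsf{T}\boldsymbol{x}$ and $\boldsymbol{x}\mapsto\|\boldsymbol{x}\|_1$ (a set sum/difference of sets). *)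

theory Defs
  imports "HOL-Analysis.Analysis"
begin

definition subdifferential :: "('a::real_inner \<Rightarrow> real) \<Rightarrow> 'a \<Rightarrow> 'a set" where
  "subdifferential f x = {g. \<forall>y. f x + inner g (y - x) \<le> f y}"

definition l1norm :: "real^'n \<Rightarrow> real" where
  "l1norm x = (\<Sum>i\<in>UNIV. \<bar>x $ i\<bar>)"

definition max_row :: "real^'n^'m \<Rightarrow> real^'n \<Rightarrow> real" where
  "max_row A x = Max (range (\<lambda>l. (A $ l) \<bullet> x))"

text \<open>Stationary point of (P_lambda): min over [-1,1]^n of max_l a_l^T x - lambda ||x||_1.\<close>
definition stationary_point :: "real^'n^'m \<Rightarrow> real \<Rightarrow> real^'n \<Rightarrow> bool" where
  "stationary_point A lam x \<longleftrightarrow>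
     (\<forall>i. -1 \<le> x $ i \<and> x $ i \<le> 1) \<and>
     (\<exists>u v :: real^'n. (\<forall>i. 0 \<le> u $ i \<and> 0 \<le> v $ i) \<and>
        0 \<in> {g - lam *\<^sub>R h - u + v | g h. g \<in> subdifferential (max_row A) x \<and> h \<in> subdifferential l1norm x} \<and>
        (\<forall>i. u $ i * (x $ i + 1) = 0 \<and> v $ i * (x $ i - 1) = 0))"

end

theory Submission
  imports Defs
begin

text \<open>
  At a coordinate with \<open>-1 < x\<^sub>i < 1\<close> the box multipliers vanish, so stationarity forces
  \<open>g\<^sub>i = \<lambda> h\<^sub>i\<close> for subgradients \<open>g\<close> of the max-term and \<open>h\<close> of the l1 norm. Moving along
  the \<open>i\<close>-th axis changes each \<open>a\<^sub>l\<^sup>T x\<close> by at most \<open>\<parallel>a\<^sub>l\<parallel>\<^sub>\<infinity>\<close> per unit step, so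
  \<open>|g\<^sub>i| \<le> max\<^sub>l \<parallel>a\<^sub>l\<parallel>\<^sub>\<infinity> < \<lambda>\<close>; but if moreover \<open>x\<^sub>i \<noteq> 0\<close> then \<open>h\<^sub>i = sgn x\<^sub>i\<close>, whence
  \<open>|g\<^sub>i| = \<lambda>\<close>, a contradiction.
\<close>

lemma subdifferential_inner_le:
  assumes "g \<in> subdifferential f x"
  shows "g \<bullet> d \<le> f (x + d) - f x"
proof -
  have "f x + g \<bullet> (x + d - x) \<le> f (x + d)"
    using assms unfolding subdifferential_def by blast
  then show ?thesis by simp
qed

lemma subdifferential_component_le:
  fixes g x :: "real^'n"
  assumes "g \<in> subdifferential f x"
  shows "g $ i * t \<le> f (x + axis i t) - f x"
  using subdifferential_inner_le[OF assms, of "axis i t"] by (simp add: inner_axis)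

lemma l1norm_add_axis: "l1norm (x + axis i t) = l1norm x + (\<bar>x $ i + t\<bar> - \<bar>x $ i\<bar>)"
proof -
  have "l1norm (x + axis i t) - l1norm x = (\<Sum>j\<in>UNIV. if j = i then \<bar>x $ i + t\<bar> - \<bar>x $ i\<bar> else 0)"
    unfolding l1norm_def sum_subtractf[symmetric] by (rule sum.cong) (auto simp: axis_def)
  then show ?thesis by simp
qed

lemma max_row_add_axis_le:
  fixes A :: "real^'n^'m"
  assumes row_bound: "\<And>l. infnorm (A $ l) \<le> M"
  shows "max_row A (x + axis i t) \<le> max_row A x + \<bar>t\<bar> * M"
  unfolding max_row_def
proof (rule Max.boundedI)
  fix a assume "a \<in> range (\<lambda>l. A $ l \<bullet> (x + axis i t))"
  then obtain l where a: "a = A $ l \<bullet> x + A $ l $ i * t"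
    by (auto simp: inner_add_right inner_axis)
  have "A $ l $ i * t \<le> \<bar>A $ l $ i\<bar> * \<bar>t\<bar>"
    by (metis abs_ge_self abs_mult)
  also have "\<dots> \<le> M * \<bar>t\<bar>"
    using component_le_infnorm_cart[of "A $ l" i] row_bound[of l] by (intro mult_right_mono) auto
  finally have "A $ l $ i * t \<le> \<bar>t\<bar> * M" by (simp add: mult.commute)
  moreover have "A $ l \<bullet> x \<le> Max (range (\<lambda>l. A $ l \<bullet> x))" by (rule Max_ge) auto
  ultimately show "a \<le> Max (range (\<lambda>l. A $ l \<bullet> x)) + \<bar>t\<bar> * M" using a by linarith
qed auto

lemma subdifferential_max_row_component_bound:
  fixes A :: "real^'n^'m"
  assumes "g \<in> subdifferential (max_row A) x" and "\<And>l. infnorm (A $ l) \<le> M"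
  shows "\<bar>g $ i\<bar> \<le> M"
proof -
  have "g $ i * t \<le> \<bar>t\<bar> * M" for t
    using subdifferential_component_le[OF assms(1), of i t] max_row_add_axis_le[OF assms(2), of x i t]
    by linarith
  from this[of 1] this[of "-1"] show ?thesis by auto
qed

lemma subdifferential_l1norm_component:
  assumes "h \<in> subdifferential l1norm x" and "x $ i \<noteq> 0"
  shows "h $ i = sgn (x $ i)"
proof -
  have step: "h $ i * t \<le> \<bar>x $ i + t\<bar> - \<bar>x $ i\<bar>" for t
    using subdifferential_component_le[OF assms(1), of i t] l1norm_add_axis[of x i t] by simp
  have "h $ i * x $ i = \<bar>x $ i\<bar>"
    using step[of "- x $ i"] step[of "x $ i"] by simp
  then have "h $ i * x $ i = sgn (x $ i) * x $ i" by (simp add: sgn_if)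
  with assms(2) show ?thesis by simp
qed

lemma stationary_point_interior_component:
  fixes x :: "real^'n"
  assumes "stationary_point A lam x" and "x $ i \<noteq> -1" and "x $ i \<noteq> 1"
  obtains g h where "g \<in> subdifferential (max_row A) x" "h \<in> subdifferential l1norm x"
    "g $ i = lam * h $ i"
proof -
  obtain u v :: "real^'n" and g h where
    g: "g \<in> subdifferential (max_row A) x" and h: "h \<in> subdifferential l1norm x" and
    eq: "0 = g - lam *\<^sub>R h - u + v" and
    "u $ i * (x $ i + 1) = 0" and "v $ i * (x $ i - 1) = 0"
    using assms(1) unfolding stationary_point_def by blast
  with assms(2,3) have "u $ i = 0" "v $ i = 0" by auto
  with arg_cong[OF eq, of "\<lambda>z. z $ i"] have "g $ i = lam * h $ i" by simp
  with g h show thesis by (rule that)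
qed

theorem theorem6:
  fixes A :: "real^'n^'m" and lam :: real and x :: "real^'n"
  assumes "lam > Max (range (\<lambda>l. infnorm (A $ l)))"
    and "stationary_point A lam x"
  shows "\<forall>i. x $ i \<in> {-1, 0, 1}"
proof (rule allI, rule ccontr)
  fix i
  assume "x $ i \<notin> {-1, 0, 1}"
  then have "x $ i \<noteq> -1" "x $ i \<noteq> 0" "x $ i \<noteq> 1" by auto
  define M where "M = Max (range (\<lambda>l. infnorm (A $ l)))"
  have row_bound: "\<And>l. infnorm (A $ l) \<le> M" unfolding M_def by (rule Max_ge) auto
  have "0 \<le> M" using row_bound infnorm_pos_le order_trans by blast
  have "M < lam" using assms(1) unfolding M_def .
  obtain g h where g: "g \<in> subdifferential (max_row A) x" and h: "h \<in> subdifferential l1norm x"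
    and gh: "g $ i = lam * h $ i"
    using stationary_point_interior_component[OF assms(2) \<open>x $ i \<noteq> -1\<close> \<open>x $ i \<noteq> 1\<close>] .
  have "\<bar>h $ i\<bar> = 1"
    using subdifferential_l1norm_component[OF h \<open>x $ i \<noteq> 0\<close>] \<open>x $ i \<noteq> 0\<close> by (simp add: abs_sgn)
  then have "\<bar>g $ i\<bar> = lam" using gh \<open>0 \<le> M\<close> \<open>M < lam\<close> by (simp add: abs_mult)
  moreover have "\<bar>g $ i\<bar> \<le> M" by (rule subdifferential_max_row_component_bound[OF g row_bound])
  ultimately show False using \<open>M < lam\<close> by simp
qed

end
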